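(* There exists a locally finite poset $Q$ with a minimum element such that: (a) $Q$ has the Möbius uncertainty property: whenever $f,g:Q\to\mathbb{C}$ are functions, neither identically zero, with $g(z)=\sum_{x\leqslant z} f(x)$ for all $z\in Q$, at least one of $\{x: f(x)\neq0\}$ and $\{x: g(x)\neq 0\}$ is infinite; and (b) $Q$ does not have property $\mathcal{H}_3$: there is a three-element subset $S\subset Q$ such that for every $z\in S$ there are only finitely many $x\in Q$ with $x\geqslant z$ and $x\not\geqslant y$ for all $y\in S\setminus\{z\}$. Consequently, the Möbius uncertainty property does not imply property $\mathcal{H}_k$ for every $k\in\mathbb{N}$.
   Context: A poset is locally finite if every interval $\{z: x\leqslant z\leqslant y\}$ is finite. For $k\in\mathbb{N}$, a poset $P$ has property $\mathcal{H}_k$ if for every subset $S\subset P$ with $|S|=k$ there exists $z\in S$ such that infinitely many $x\in P$ satisfy $x\geqslant z$ and $x\not\geqslant y$ for all $y\in S\setminus\{z\}$. *)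

theory Defs
  imports Complex_Main
begin

text \<open>Carriers live in the type nat: a locally finite poset with a
  minimum element is countable, so this loses no generality.\<close>

definition poset_on :: "'a set \<Rightarrow> ('a \<Rightarrow> 'a \<Rightarrow> bool) \<Rightarrow> bool" where
  "poset_on Q le \<longleftrightarrow>
     (\<forall>x\<in>Q. le x x) \<and>
     (\<forall>x\<in>Q. \<forall>y\<in>Q. le x y \<and> le y x \<longrightarrow> x = y) \<and>
     (\<forall>x\<in>Q. \<forall>y\<in>Q. \<forall>z\<in>Q. le x y \<and> le y z \<longrightarrow> le x z)"

definition locally_finite_on :: "'a set \<Rightarrow> ('a \<Rightarrow> 'a \<Rightarrow> bool) \<Rightarrow> bool" where
  "locally_finite_on Q le \<longleftrightarrow> (\<forall>x\<in>Q. \<forall>y\<in>Q. finite {z\<in>Q. le x z \<and> le z y})"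

definition has_minimum_on :: "'a set \<Rightarrow> ('a \<Rightarrow> 'a \<Rightarrow> bool) \<Rightarrow> bool" where
  "has_minimum_on Q le \<longleftrightarrow> (\<exists>m\<in>Q. \<forall>x\<in>Q. le m x)"

definition mobius_uncertainty :: "'a set \<Rightarrow> ('a \<Rightarrow> 'a \<Rightarrow> bool) \<Rightarrow> bool" where
  "mobius_uncertainty Q le \<longleftrightarrow>
     (\<forall>f g :: 'a \<Rightarrow> complex.
        (\<exists>x\<in>Q. f x \<noteq> 0) \<and> (\<exists>x\<in>Q. g x \<noteq> 0) \<and>
        (\<forall>z\<in>Q. g z = (\<Sum>x\<in>{x\<in>Q. le x z}. f x))
        \<longrightarrow> infinite {x\<in>Q. f x \<noteq> 0} \<or> infinite {x\<in>Q. g x \<noteq> 0})"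

definition property_H :: "nat \<Rightarrow> 'a set \<Rightarrow> ('a \<Rightarrow> 'a \<Rightarrow> bool) \<Rightarrow> bool" where
  "property_H k Q le \<longleftrightarrow>
     (\<forall>S. S \<subseteq> Q \<and> finite S \<and> card S = k \<longrightarrow>
        (\<exists>z\<in>S. infinite {x\<in>Q. le z x \<and> (\<forall>y\<in>S - {z}. \<not> le y x)}))"

end

(*
  If infinitely many elements z share one strict lower set D and g = zeta f with f and g finitely
  supported, then some such z lies outside both supports, whence 0 = g z = f z + sum f D = sum f D.
  In the witness poset, the children of every node share a strict lower set, which for a node m of
  length at least 2 is the lower set of m itself. Hence g vanishes on all such nodes, and comparing
  a node with its parent shows that f vanishes there too. The four families of tree roots then give
  four independent linear equations in the values of f at the minimum and at the three atoms.
  Property H_3 fails for the three atoms because every element strictly above one atom lies above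
  a second one.
*)
theory Submission
  imports Defs "HOL-Library.Infinite_Set" "HOL-Library.Sublist" "HOL-Library.Nat_Bijection"
begin

lemma Collect_mem_image_conv: "{y \<in> e ` A. P y} = e ` {x \<in> A. P (e x)}"
  by auto

locale order_embedding =
  fixes Q :: "'a set" and le :: "'a \<Rightarrow> 'a \<Rightarrow> bool"
    and e :: "'a \<Rightarrow> 'b" and le' :: "'b \<Rightarrow> 'b \<Rightarrow> bool"
  assumes inj: "inj_on e Q"
    and le'_iff: "x \<in> Q \<Longrightarrow> y \<in> Q \<Longrightarrow> le' (e x) (e y) \<longleftrightarrow> le x y"
begin

lemma poset_on_image:
  assumes "poset_on Q le"
  shows "poset_on (e ` Q) le'"
proof -
  have "\<forall>x\<in>Q. le x x" "\<forall>x\<in>Q. \<forall>y\<in>Q. le x y \<and> le y x \<longrightarrow> x = y"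
    "\<forall>x\<in>Q. \<forall>y\<in>Q. \<forall>z\<in>Q. le x y \<and> le y z \<longrightarrow> le x z"
    using assms unfolding poset_on_def by blast+
  then show ?thesis
    unfolding poset_on_def ball_simps by (metis le'_iff)
qed

lemma locally_finite_on_image: "locally_finite_on Q le \<Longrightarrow> locally_finite_on (e ` Q) le'"
  unfolding locally_finite_on_def
  by (simp add: Collect_mem_image_conv le'_iff cong: conj_cong)

lemma has_minimum_on_image: "has_minimum_on Q le \<Longrightarrow> has_minimum_on (e ` Q) le'"
  unfolding has_minimum_on_def by (simp add: le'_iff)

lemma mobius_uncertainty_image:
  assumes "mobius_uncertainty Q le"
  shows "mobius_uncertainty (e ` Q) le'"
  unfolding mobius_uncertainty_def
proof (intro allI impI)
  fix f g :: "'b \<Rightarrow> complex"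
  assume nonzero_and_zeta: "(\<exists>x\<in>e ` Q. f x \<noteq> 0) \<and> (\<exists>x\<in>e ` Q. g x \<noteq> 0) \<and>
    (\<forall>z\<in>e ` Q. g z = (\<Sum>x\<in>{x \<in> e ` Q. le' x z}. f x))"
  have "g (e z) = (\<Sum>x\<in>{x\<in>Q. le x z}. f (e x))" if "z \<in> Q" for z
  proof -
    have "g (e z) = (\<Sum>x\<in>{x \<in> e ` Q. le' x (e z)}. f x)"
      using nonzero_and_zeta that by blast
    also have "{x \<in> e ` Q. le' x (e z)} = e ` {x\<in>Q. le x z}"
      using that by (simp add: Collect_mem_image_conv le'_iff cong: conj_cong)
    finally show ?thesis
      by (simp add: sum.reindex inj_on_subset[OF inj])
  qed
  moreover have "\<exists>x\<in>Q. f (e x) \<noteq> 0" "\<exists>x\<in>Q. g (e x) \<noteq> 0"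
    using nonzero_and_zeta by auto
  ultimately have "infinite {x\<in>Q. f (e x) \<noteq> 0} \<or> infinite {x\<in>Q. g (e x) \<noteq> 0}"
    using assms[unfolded mobius_uncertainty_def, rule_format, of "\<lambda>x. f (e x)" "\<lambda>x. g (e x)"]
    by blast
  then show "infinite {x \<in> e ` Q. f x \<noteq> 0} \<or> infinite {x \<in> e ` Q. g x \<noteq> 0}"
    by (simp add: Collect_mem_image_conv finite_image_iff inj_on_subset[OF inj])
qed

lemma not_property_H_image:
  assumes "\<not> property_H k Q le"
  shows "\<not> property_H k (e ` Q) le'"
proof -
  obtain S where S: "S \<subseteq> Q" "finite S" "card S = k"
    and fin: "\<And>z. z \<in> S \<Longrightarrow> finite {x\<in>Q. le z x \<and> (\<forall>y\<in>S - {z}. \<not> le y x)}"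
    using assms unfolding property_H_def by blast
  have "{x \<in> e ` Q. le' (e z) x \<and> (\<forall>y\<in>e ` S - {e z}. \<not> le' y x)} =
      e ` {x\<in>Q. le z x \<and> (\<forall>y\<in>S - {z}. \<not> le y x)}" if "z \<in> S" for z
  proof -
    have "e ` S - {e z} = e ` (S - {z})"
      using that S(1) inj_on_image_set_diff[OF inj, of S "{z}"] by auto
    moreover have "le' (e z) (e x) \<and> (\<forall>y\<in>S - {z}. \<not> le' (e y) (e x)) \<longleftrightarrow>
        le z x \<and> (\<forall>y\<in>S - {z}. \<not> le y x)" if "x \<in> Q" for x
      using \<open>z \<in> S\<close> \<open>x \<in> Q\<close> S(1) by (auto simp: le'_iff subset_iff)
    ultimately show ?thesis
      by (simp add: Collect_mem_image_conv cong: conj_cong)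
  qed
  then have "\<forall>z'\<in>e ` S. finite {x \<in> e ` Q. le' z' x \<and> (\<forall>y\<in>e ` S - {z'}. \<not> le' y x)}"
    using fin by auto
  moreover have "e ` S \<subseteq> e ` Q" "finite (e ` S)" "card (e ` S) = k"
    using S inj by (auto simp: card_image inj_on_subset)
  ultimately show ?thesis
    unfolding property_H_def by blast
qed

end

lemma sum_shared_lower_set_eq_0:
  fixes f g :: "'a \<Rightarrow> 'b::comm_monoid_add"
  assumes zeta: "\<forall>z\<in>Q. g z = (\<Sum>x\<in>{x\<in>Q. le x z}. f x)"
    and f_fin: "finite {x\<in>Q. f x \<noteq> 0}" and g_fin: "finite {x\<in>Q. g x \<noteq> 0}"
    and C: "infinite C" "C \<subseteq> Q"
    and lower: "\<And>z. z \<in> C \<Longrightarrow> {x\<in>Q. le x z} = insert z D \<and> z \<notin> D"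
    and "finite D"
  shows "sum f D = 0"
proof -
  have "infinite (C - ({x\<in>Q. f x \<noteq> 0} \<union> {x\<in>Q. g x \<noteq> 0}))"
    using C f_fin g_fin by (simp add: Diff_infinite_finite)
  then obtain z where "z \<in> C - ({x\<in>Q. f x \<noteq> 0} \<union> {x\<in>Q. g x \<noteq> 0})"
    using infinite_imp_nonempty by blast
  then have z: "z \<in> C" "z \<in> Q" "f z = 0" "g z = 0"
    using C(2) by auto
  have "0 = g z" using z by simp
  also have "\<dots> = sum f (insert z D)"
    using zeta z(2) lower[OF z(1)] by simp
  also have "\<dots> = f z + sum f D"
    using lower[OF z(1)] \<open>finite D\<close> by simp
  finally show ?thesis using z by simp
qed

text \<open>The lists k # ns with ns \<noteq> [] form
  four infinitely branching trees ordered by prefix, with roots [k, n]; a node of the k-th tree lies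
  above exactly the atoms [i] with i \<noteq> k, so the nodes of the fourth tree lie above all three.\<close>

definition tree_poset :: "nat list set" where
  "tree_poset = {[]} \<union> {[i] | i. i < 3} \<union> {k # ns | k ns. k < 4 \<and> ns \<noteq> []}"

definition tree_le :: "nat list \<Rightarrow> nat list \<Rightarrow> bool" where
  "tree_le x y \<longleftrightarrow> x = [] \<or> x = y \<or> (length x = 1 \<and> 2 \<le> length y \<and> hd x \<noteq> hd y) \<or>
     (2 \<le> length x \<and> prefix x y)"

lemma prefix_hd: "prefix xs ys \<Longrightarrow> xs \<noteq> [] \<Longrightarrow> hd ys = hd xs"
  by (auto simp: prefix_def)

lemma tree_poset_cases:
  assumes "x \<in> tree_poset"
  obtains "x = []" | i where "i < 3" "x = [i]" | "2 \<le> length x" "hd x < 4"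
proof -
  have "x = [] \<or> (\<exists>i<3. x = [i]) \<or> (2 \<le> length x \<and> hd x < 4)"
    using assms unfolding tree_poset_def by (force simp: Suc_le_eq)
  then show thesis
    using that by blast
qed

lemma snoc_in_tree_poset: "q \<noteq> [] \<Longrightarrow> hd q < 4 \<Longrightarrow> q @ [n] \<in> tree_poset"
  unfolding tree_poset_def by (cases q) auto

lemma tree_le_trans:
  assumes xy: "tree_le x y" and yz: "tree_le y z"
  shows "tree_le x z"
proof (cases "x = [] \<or> x = y \<or> y = z")
  case False
  then have y_long: "2 \<le> length y"
    using xy unfolding tree_le_def by (auto dest: prefix_length_le)
  then have "prefix y z"
    using yz False unfolding tree_le_def by auto
  then have "hd z = hd y" "length y \<le> length z"
    using y_long by (auto intro: prefix_hd prefix_length_le)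
  then show ?thesis
    using xy y_long \<open>prefix y z\<close> unfolding tree_le_def by (auto intro: prefix_order.trans)
qed (use xy yz in \<open>auto simp: tree_le_def\<close>)

lemma poset_on_tree: "poset_on tree_poset tree_le"
proof -
  have "tree_le x x" for x
    unfolding tree_le_def by simp
  moreover have "x = y" if "tree_le x y" "tree_le y x" for x y
    using that unfolding tree_le_def by (auto dest: prefix_length_le)
  ultimately show ?thesis
    unfolding poset_on_def using tree_le_trans by blast
qed

lemma has_minimum_on_tree: "has_minimum_on tree_poset tree_le"
  unfolding has_minimum_on_def tree_poset_def tree_le_def by auto

lemma not_property_H_3_tree: "\<not> property_H 3 tree_poset tree_le"
proof -
  let ?S = "{[0], [1], [2]} :: nat list set"
  have exclusive_up: "{x \<in> tree_poset. tree_le [i] x \<and> (\<forall>y\<in>?S - {[i]}. \<not> tree_le y x)} \<subseteq> {[i]}"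
    if "i < 3" for i
  proof
    fix x assume x: "x \<in> {x \<in> tree_poset. tree_le [i] x \<and> (\<forall>y\<in>?S - {[i]}. \<not> tree_le y x)}"
    show "x \<in> {[i]}"
    proof (rule ccontr)
      assume "x \<notin> {[i]}"
      then have x_long: "2 \<le> length x" "hd x \<noteq> i"
        using x unfolding tree_le_def by auto
      have "\<exists>j::nat. j < 3 \<and> j \<noteq> i \<and> j \<noteq> hd x"
        by presburger
      then obtain j :: nat where "j < 3" "j \<noteq> i" "j \<noteq> hd x"
        by blast
      then have "[j] \<in> ?S - {[i]}" "tree_le [j] x"
        using x_long \<open>i < 3\<close> unfolding tree_le_def by auto
      then show False
        using x by blast
    qed
  qed
  have "finite {x \<in> tree_poset. tree_le z x \<and> (\<forall>y\<in>?S - {z}. \<not> tree_le y x)}"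
    if z: "z \<in> ?S" for z
  proof -
    obtain i where "i < 3" "z = [i]"
      using z by auto
    then show ?thesis
      using exclusive_up finite_subset by blast
  qed
  moreover have "?S \<subseteq> tree_poset"
    unfolding tree_poset_def by auto
  ultimately show ?thesis
    unfolding property_H_def by (intro notI) (drule spec[of _ ?S], auto)
qed

text \<open>For q \<noteq> [] with hd q < 4 this is the strict lower set shared by all children q @ [n];
  q = [3] is not an element, but a virtual parent of the roots of the fourth tree.\<close>

definition lower_of_children :: "nat list \<Rightarrow> nat list set" where
  "lower_of_children q =
     {x \<in> tree_poset. x = [] \<or> (length x = 1 \<and> hd x \<noteq> hd q) \<or> (2 \<le> length x \<and> prefix x q)}"

lemma finite_lower_of_children: "finite (lower_of_children q)"
proof (rule finite_subset)
  show "lower_of_children q \<subseteq> {[], [0], [1], [2]} \<union> set (prefixes q)"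
    unfolding lower_of_children_def by (auto elim!: tree_poset_cases)
qed simp

lemma finite_tree_lower_set: "finite {x \<in> tree_poset. tree_le x y}"
proof (rule finite_subset)
  show "{x \<in> tree_poset. tree_le x y} \<subseteq> insert y (lower_of_children y)"
    unfolding lower_of_children_def tree_le_def by auto
qed (simp add: finite_lower_of_children)

lemma locally_finite_on_tree: "locally_finite_on tree_poset tree_le"
  unfolding locally_finite_on_def
  by (auto intro: finite_subset[OF _ finite_tree_lower_set])

lemma tree_lower_set_snoc:
  assumes "q \<noteq> []" "hd q < 4"
  shows "{x \<in> tree_poset. tree_le x (q @ [n])} = insert (q @ [n]) (lower_of_children q)"
proof -
  have "tree_le x (q @ [n]) \<longleftrightarrow>
      x = q @ [n] \<or> x = [] \<or> (length x = 1 \<and> hd x \<noteq> hd q) \<or> (2 \<le> length x \<and> prefix x q)" for x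
    using assms(1) unfolding tree_le_def by (auto simp: Suc_le_eq)
  then show ?thesis
    using snoc_in_tree_poset[OF assms] unfolding lower_of_children_def by auto
qed

lemma snoc_notin_lower_of_children: "q \<noteq> [] \<Longrightarrow> q @ [n] \<notin> lower_of_children q"
  unfolding lower_of_children_def by (auto dest: prefix_length_le)

lemma tree_lower_set_eq_lower_of_children:
  assumes "2 \<le> length m"
  shows "{x \<in> tree_poset. tree_le x m} = lower_of_children m"
  using assms unfolding lower_of_children_def tree_le_def by auto

lemma lower_of_children_singleton:
  "lower_of_children [k] = insert [] ((\<lambda>i. [i]) ` ({..<3} - {k}))"
proof -
  have "x \<in> lower_of_children [k] \<longleftrightarrow> x = [] \<or> (\<exists>i<3. i \<noteq> k \<and> x = [i])" for x
  proof
    assume "x \<in> lower_of_children [k]"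
    then have "x \<in> tree_poset" "x = [] \<or> (length x = 1 \<and> hd x \<noteq> k)"
      unfolding lower_of_children_def by (auto dest: prefix_length_le)
    then show "x = [] \<or> (\<exists>i<3. i \<noteq> k \<and> x = [i])"
      by (elim tree_poset_cases) auto
  qed (auto simp: lower_of_children_def tree_poset_def)
  then show ?thesis
    by auto
qed

context
  fixes f g :: "nat list \<Rightarrow> 'b::comm_monoid_add"
  assumes zeta: "\<forall>z\<in>tree_poset. g z = (\<Sum>x\<in>{x \<in> tree_poset. tree_le x z}. f x)"
    and f_fin: "finite {x \<in> tree_poset. f x \<noteq> 0}" and g_fin: "finite {x \<in> tree_poset. g x \<noteq> 0}"
begin

lemma sum_lower_of_children_eq_0:
  assumes q: "q \<noteq> []" "hd q < 4"
  shows "sum f (lower_of_children q) = 0"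
proof (rule sum_shared_lower_set_eq_0[OF zeta f_fin g_fin])
  show "infinite (range (\<lambda>n. q @ [n]))"
    by (rule range_inj_infinite) (simp add: inj_def)
  show "range (\<lambda>n. q @ [n]) \<subseteq> tree_poset"
    using snoc_in_tree_poset[OF q] by auto
  show "{x \<in> tree_poset. tree_le x z} = insert z (lower_of_children q) \<and> z \<notin> lower_of_children q"
    if "z \<in> range (\<lambda>n. q @ [n])" for z
    using that tree_lower_set_snoc[OF q] snoc_notin_lower_of_children[OF q(1)] by auto
qed (rule finite_lower_of_children)

lemma vanishes_on_long_nodes:
  assumes m: "m \<in> tree_poset" "2 \<le> length m"
  shows "f m = 0"
proof -
  have "hd m < 4"
    using m(1) by (rule tree_poset_cases) (use m(2) in auto)
  with m(2) have m_node: "m \<noteq> []" "hd m < 4"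
    by auto
  define p where "p = butlast m"
  have m_eq: "m = p @ [last m]"
    using m_node(1) unfolding p_def by simp
  have "p \<noteq> []"
    using m(2) unfolding p_def by (cases m) auto
  with m_node m_eq have p: "p \<noteq> []" "hd p < 4"
    by (metis hd_append2)+
  have "g m = sum f (lower_of_children m)"
    using zeta m tree_lower_set_eq_lower_of_children[OF m(2)] by simp
  also have "\<dots> = 0"
    using sum_lower_of_children_eq_0[OF m_node] .
  finally have "g m = 0" .
  have "g m = sum f (insert m (lower_of_children p))"
    using zeta m(1) tree_lower_set_snoc[OF p, of "last m", folded m_eq] by simp
  also have "\<dots> = f m + sum f (lower_of_children p)"
    using finite_lower_of_children snoc_notin_lower_of_children[OF p(1), of "last m", folded m_eq]
    by (rule sum.insert)
  also have "\<dots> = f m"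
    using sum_lower_of_children_eq_0[OF p] by simp
  finally show ?thesis
    using \<open>g m = 0\<close> by simp
qed

end

lemma tree_zeta_finite_supports_imp_eq_0:
  fixes f g :: "nat list \<Rightarrow> 'b::ab_group_add"
  assumes zeta: "\<forall>z\<in>tree_poset. g z = (\<Sum>x\<in>{x \<in> tree_poset. tree_le x z}. f x)"
    and fin: "finite {x \<in> tree_poset. f x \<noteq> 0}" "finite {x \<in> tree_poset. g x \<noteq> 0}"
    and "x \<in> tree_poset"
  shows "f x = 0"
proof -
  have roots: "f [] + ((\<Sum>i<3. f [i]) - (if k < 3 then f [k] else 0)) = 0" if "k < 4" for k
  proof -
    have "sum f ((\<lambda>i. [i]) ` ({..<3} - {k})) = (\<Sum>i\<in>{..<3} - {k}. f [i])"
      by (subst sum.reindex) (auto simp: inj_on_def)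
    moreover have "sum f (lower_of_children [k]) = 0"
      using sum_lower_of_children_eq_0[OF zeta fin] that by simp
    ultimately show ?thesis
      by (cases "k < 3") (simp_all add: lower_of_children_singleton sum_diff1 image_iff)
  qed
  have total: "f [] + (\<Sum>i<3. f [i]) = 0"
    using roots[of 3] by simp
  have atoms: "f [k] = 0" if "k < 3" for k
  proof -
    have "f [k] = (f [] + (\<Sum>i<3. f [i])) - (f [] + ((\<Sum>i<3. f [i]) - f [k]))"
      by (simp add: algebra_simps)
    also have "\<dots> = 0"
      using total roots[of k] that by simp
    finally show ?thesis .
  qed
  then have "f [] = 0"
    using total by simp
  show ?thesis
    using assms(4) by (rule tree_poset_cases)
      (use atoms vanishes_on_long_nodes[OF zeta fin] \<open>f [] = 0\<close> assms(4) in auto)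
qed

lemma mobius_uncertainty_tree: "mobius_uncertainty tree_poset tree_le"
  unfolding mobius_uncertainty_def
  using tree_zeta_finite_supports_imp_eq_0 by blast

theorem theorem1p7:
  shows "\<exists>(Q :: nat set) (le :: nat \<Rightarrow> nat \<Rightarrow> bool).
           poset_on Q le \<and> locally_finite_on Q le \<and> has_minimum_on Q le \<and>
           mobius_uncertainty Q le \<and> \<not> property_H 3 Q le"
proof -
  interpret order_embedding tree_poset tree_le list_encode "\<lambda>x y. tree_le (list_decode x) (list_decode y)"
    by unfold_locales (simp_all add: inj_list_encode)
  show ?thesis
    using poset_on_image[OF poset_on_tree] locally_finite_on_image[OF locally_finite_on_tree]
      has_minimum_on_image[OF has_minimum_on_tree] mobius_uncertainty_image[OF mobius_uncertainty_tree]
      not_property_H_image[OF not_property_H_3_tree]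
    by blast
qed

end
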